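(* Let $m\geq 2$ be an integer, let $(\alpha_i)_{1\leq i\leq m}\in\left]0,1\right[^m$, and define $$\phi(\alpha_1,\ldots,\alpha_m)=\dfrac{1}{1+\dfrac{1}{\sum_{i=1}^m\dfrac{\alpha_i}{1-\alpha_i}}}.$$ Let $(\sigma_j)_{1\leq j\leq m}$ be the elementary symmetric polynomials in $(\alpha_i)_{1\leq i\leq m}$, i.e., $\sigma_j=\sum_{1\leq i_1<\cdots<i_j\leq m}\prod_{l=1}^j\alpha_{i_l}$ for every $j\in\{1,\ldots,m\}$. Then: (i) $\phi(\alpha_1,\ldots,\alpha_m)=\Big[\sum_{l=1}^{+\infty}\sum_{i=1}^{m}\alpha_{i}^{l}\Big]\Big/\Big[1+\sum_{l=1}^{+\infty}\sum_{i=1}^{m}\alpha_{i}^{l}\Big]$; (ii) $\phi(\alpha_1,\ldots,\alpha_m)=\Big[\sum_{j=1}^m(-1)^{j-1}j\sigma_j\Big]\Big/\Big[1+\sum_{j=2}^{m}(-1)^{j-1}(j-1)\sigma_j\Big]$; (iii) $\phi(\alpha_1,\ldots,\alpha_m)>\max_{1\leq i\leq m}\alpha_i$. *)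

theory Defs
  imports "HOL-Analysis.Analysis"
begin

definition phi :: "nat \<Rightarrow> (nat \<Rightarrow> real) \<Rightarrow> real" where
  "phi m \<alpha> = 1 / (1 + 1 / (\<Sum>i=1..m. \<alpha> i / (1 - \<alpha> i)))"

definition esym :: "nat \<Rightarrow> (nat \<Rightarrow> real) \<Rightarrow> nat \<Rightarrow> real" where
  "esym m \<alpha> j = (\<Sum>S\<in>{S. S \<subseteq> {1..m} \<and> card S = j}. \<Prod>i\<in>S. \<alpha> i)"

end

theory Submission
  imports Defs
begin

text \<open>
  With \<open>s = (\<Sum>i. \<alpha>\<^sub>i / (1 - \<alpha>\<^sub>i))\<close> we have \<open>\<phi> = s / (1 + s)\<close>. Part (i) holds because each
  odds ratio \<open>\<alpha>\<^sub>i / (1 - \<alpha>\<^sub>i)\<close> is the geometric series \<open>\<Sum>l\<ge>1. \<alpha>\<^sub>i ^ l\<close>. For part (ii),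
  multiply numerator and denominator by \<open>Q = (\<Prod>i. 1 - \<alpha>\<^sub>i)\<close>: expanding the product gives
  \<open>Q = (\<Sum>j. (-1) ^ j * \<sigma>\<^sub>j)\<close>, and \<open>Q * s = (\<Sum>i. \<alpha>\<^sub>i * (\<Prod>k\<noteq>i. 1 - \<alpha>\<^sub>k))\<close> is, up to sign,
  the same expansion with every term weighted by its degree, i.e. \<open>\<Sum>j. (-1) ^ (j - 1) * j * \<sigma>\<^sub>j\<close>.
  For part (iii), \<open>\<alpha>\<^sub>k < s / (1 + s)\<close> is equivalent to \<open>\<alpha>\<^sub>k / (1 - \<alpha>\<^sub>k) < s\<close>, which holds
  because for \<open>m \<ge> 2\<close> the sum \<open>s\<close> has a further positive summand.
\<close>

lemma sum_Pow_insert: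
  fixes f :: "'a set \<Rightarrow> 'b::comm_monoid_add"
  assumes "finite A" "x \<notin> A"
  shows "(\<Sum>S\<in>Pow (insert x A). f S) = (\<Sum>S\<in>Pow A. f S) + (\<Sum>S\<in>Pow A. f (insert x S))"
proof -
  have inj: "inj_on (insert x) (Pow A)"
    using assms(2) unfolding inj_on_def by (metis Diff_insert_absorb PowD subsetD)
  have "(\<Sum>S\<in>Pow (insert x A). f S) = (\<Sum>S\<in>Pow A. f S) + (\<Sum>S\<in>insert x ` Pow A. f S)"
    unfolding Pow_insert by (rule sum.union_disjoint) (use assms in auto)
  also have "(\<Sum>S\<in>insert x ` Pow A. f S) = (\<Sum>S\<in>Pow A. f (insert x S))"
    using sum.reindex[OF inj] by simp
  finally show ?thesis .
qed

lemma sum_Pow_alternating_prod: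
  fixes a :: "'a \<Rightarrow> 'b::comm_ring_1"
  assumes "finite A"
  shows "(\<Sum>S\<in>Pow A. (-1) ^ card S * (\<Prod>i\<in>S. a i)) = (\<Prod>i\<in>A. 1 - a i)"
proof -
  have "(\<Prod>i\<in>A. 1 - a i) = (\<Prod>i\<in>A. - a i + 1)"
    by simp
  also have "\<dots> = (\<Sum>S\<in>Pow A. \<Prod>i\<in>S. - a i)"
    using prod_add[OF assms, of "\<lambda>i. - a i" "\<lambda>_. 1"] by simp
  finally show ?thesis
    by (simp add: prod_uminus)
qed

lemma sum_Pow_alternating_card_prod:
  fixes a :: "'a \<Rightarrow> 'b::comm_ring_1"
  assumes "finite A"
  shows "(\<Sum>S\<in>Pow A. (-1) ^ card S * of_nat (card S) * (\<Prod>i\<in>S. a i))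
       = - (\<Sum>i\<in>A. a i * (\<Prod>k\<in>A - {i}. 1 - a k))"
  using assms
proof (induction A rule: finite_induct)
  case empty
  then show ?case by simp
next
  case (insert x A)
  have fin: "\<And>S. S \<in> Pow A \<Longrightarrow> finite S \<and> x \<notin> S"
    using insert.hyps finite_subset by blast
  have lhs: "(\<Sum>S\<in>Pow A. (-1) ^ card (insert x S) * of_nat (card (insert x S)) * (\<Prod>i\<in>insert x S. a i))
       = - a x * (\<Sum>S\<in>Pow A. (-1) ^ card S * of_nat (card S) * (\<Prod>i\<in>S. a i))
         - a x * (\<Sum>S\<in>Pow A. (-1) ^ card S * (\<Prod>i\<in>S. a i))"
    unfolding sum_distrib_left sum_subtractf[symmetric]
    by (rule sum.cong) (auto simp: fin algebra_simps)
  have rhs: "(\<Sum>i\<in>insert x A. a i * (\<Prod>k\<in>insert x A - {i}. 1 - a k))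
     = a x * (\<Prod>k\<in>A. 1 - a k) + (1 - a x) * (\<Sum>i\<in>A. a i * (\<Prod>k\<in>A - {i}. 1 - a k))"
    unfolding sum_distrib_left
  proof (subst sum.insert)
    have "insert x A - {i} = insert x (A - {i})" "x \<notin> A - {i}" if "i \<in> A" for i
      using that insert.hyps by auto
    then show "a x * (\<Prod>k\<in>insert x A - {x}. 1 - a k) + (\<Sum>i\<in>A. a i * (\<Prod>k\<in>insert x A - {i}. 1 - a k))
      = a x * (\<Prod>k\<in>A. 1 - a k) + (\<Sum>i\<in>A. (1 - a x) * (a i * (\<Prod>k\<in>A - {i}. 1 - a k)))"
      using insert.hyps by (auto intro!: sum.cong simp: Diff_insert_absorb)
  qed (use insert.hyps in auto)
  show ?case
    unfolding sum_Pow_insert[OF insert.hyps] lhs rhs insert.IH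
      sum_Pow_alternating_prod[OF insert.hyps(1)]
    by (simp add: algebra_simps)
qed

lemma sum_weighted_esym:
  "(\<Sum>j=0..m. h j * esym m a j) = (\<Sum>S\<in>Pow {1..m}. h (card S) * (\<Prod>i\<in>S. a i))"
proof -
  have "(\<Sum>j=0..m. h j * esym m a j)
      = (\<Sum>j=0..m. \<Sum>S\<in>{S\<in>Pow {1..m}. card S = j}. h (card S) * (\<Prod>i\<in>S. a i))"
    unfolding esym_def sum_distrib_left by (rule sum.cong) (auto intro!: sum.cong)
  also have "\<dots> = (\<Sum>S\<in>Pow {1..m}. h (card S) * (\<Prod>i\<in>S. a i))"
  proof (rule sum.group)
    show "card ` Pow {1..m} \<subseteq> {0..m}"
      using card_mono[of "{1..m}"] by fastforce
  qed auto
  finally show ?thesis .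
qed

lemma esym_0 [simp]: "esym m a 0 = 1"
proof -
  have "{S. S \<subseteq> {1..m} \<and> card S = 0} = {{}}"
    using finite_subset[of _ "{1..m}"] by (auto simp: card_eq_0_iff)
  then show ?thesis
    unfolding esym_def by simp
qed

lemma alternating_degree_esym_sum:
  "(\<Sum>j=1..m. (-1) ^ (j - 1) * real j * esym m a j)
     = (\<Sum>i\<in>{1..m}. a i * (\<Prod>k\<in>{1..m} - {i}. 1 - a k))"
proof -
  have "(\<Sum>j=1..m. (-1) ^ (j - 1) * real j * esym m a j)
      = (\<Sum>j=0..m. (- ((-1) ^ j * real j)) * esym m a j)"
    by (subst sum.atLeast_Suc_atMost[of 0 m]) (auto intro!: sum.cong simp: power_eq_if)
  also have "\<dots> = - (\<Sum>S\<in>Pow {1..m}. (-1) ^ card S * real (card S) * (\<Prod>i\<in>S. a i))"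
    unfolding sum_weighted_esym by (simp add: sum_negf[symmetric])
  finally show ?thesis
    by (simp add: sum_Pow_alternating_card_prod)
qed

lemma one_plus_alternating_esym_sum:
  "1 + (\<Sum>j=2..m. (-1) ^ (j - 1) * real (j - 1) * esym m a j)
     = (\<Prod>i\<in>{1..m}. 1 - a i) + (\<Sum>i\<in>{1..m}. a i * (\<Prod>k\<in>{1..m} - {i}. 1 - a k))"
proof -
  define g where "g j = (-1) ^ j * (1 - real j) * esym m a j" for j
  have "(\<Sum>j=2..m. (-1) ^ (j - 1) * real (j - 1) * esym m a j) = (\<Sum>j=2..m. g j)"
    by (rule sum.cong) (auto simp: g_def power_eq_if algebra_simps)
  also have "\<dots> = (\<Sum>j=1..m. g j)"
    by (cases m) (auto simp: g_def sum.atLeast_Suc_atMost numeral_2_eq_2)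
  finally have "1 + (\<Sum>j=2..m. (-1) ^ (j - 1) * real (j - 1) * esym m a j) = (\<Sum>j=0..m. g j)"
    by (simp add: sum.atLeast_Suc_atMost g_def)
  also have "\<dots> = (\<Sum>S\<in>Pow {1..m}. (-1) ^ card S * (\<Prod>i\<in>S. a i))
          - (\<Sum>S\<in>Pow {1..m}. (-1) ^ card S * real (card S) * (\<Prod>i\<in>S. a i))"
    unfolding g_def sum_weighted_esym sum_subtractf[symmetric]
    by (rule sum.cong) (auto simp: algebra_simps)
  finally show ?thesis
    by (simp add: sum_Pow_alternating_prod sum_Pow_alternating_card_prod)
qed

lemma prod_one_minus_mult_sum_odds:
  fixes a :: "'a \<Rightarrow> 'b::field"
  assumes "finite A" "\<And>i. i \<in> A \<Longrightarrow> a i \<noteq> 1"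
  shows "(\<Prod>i\<in>A. 1 - a i) * (\<Sum>i\<in>A. a i / (1 - a i)) = (\<Sum>i\<in>A. a i * (\<Prod>k\<in>A - {i}. 1 - a k))"
  unfolding sum_distrib_left
proof (rule sum.cong)
  fix i assume i: "i \<in> A"
  then have split: "(\<Prod>k\<in>A. 1 - a k) = (1 - a i) * (\<Prod>k\<in>A - {i}. 1 - a k)"
    using assms(1) by (simp add: prod.remove)
  show "(\<Prod>k\<in>A. 1 - a k) * (a i / (1 - a i)) = a i * (\<Prod>k\<in>A - {i}. 1 - a k)"
    unfolding split using assms(2)[OF i] by (simp add: field_simps)
qed simp

lemma sum_odds_pos:
  fixes \<alpha> :: "nat \<Rightarrow> real"
  assumes "m \<ge> 1" "\<And>i. i \<in> {1..m} \<Longrightarrow> 0 < \<alpha> i \<and> \<alpha> i < 1"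
  shows "(\<Sum>i=1..m. \<alpha> i / (1 - \<alpha> i)) > 0"
  using assms by (intro sum_pos) auto

lemma phi_eq_odds_ratio:
  assumes "(\<Sum>i=1..m. \<alpha> i / (1 - \<alpha> i)) \<noteq> 0"
  shows "phi m \<alpha> = (\<Sum>i=1..m. \<alpha> i / (1 - \<alpha> i)) / (1 + (\<Sum>i=1..m. \<alpha> i / (1 - \<alpha> i)))"
  using assms unfolding phi_def by (simp add: field_simps)

lemma sums_sum_power_Suc:
  fixes a :: "'a \<Rightarrow> 'b::real_normed_field"
  assumes "\<And>i. i \<in> A \<Longrightarrow> norm (a i) < 1"
  shows "(\<lambda>l. \<Sum>i\<in>A. a i ^ Suc l) sums (\<Sum>i\<in>A. a i / (1 - a i))"
proof (rule sums_sum)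
  fix i assume "i \<in> A"
  from sums_mult[OF geometric_sums[OF assms[OF this]], of "a i"]
  show "(\<lambda>l. a i ^ Suc l) sums (a i / (1 - a i))"
    by (simp add: field_simps)
qed

lemma phi_eq_power_series_ratio:
  fixes \<alpha> :: "nat \<Rightarrow> real"
  assumes "m \<ge> 1" "\<And>i. i \<in> {1..m} \<Longrightarrow> 0 < \<alpha> i \<and> \<alpha> i < 1"
  shows "summable (\<lambda>l. \<Sum>i=1..m. \<alpha> i ^ Suc l)
    \<and> phi m \<alpha> = (\<Sum>l. \<Sum>i=1..m. \<alpha> i ^ Suc l) / (1 + (\<Sum>l. \<Sum>i=1..m. \<alpha> i ^ Suc l))"
proof -
  have "(\<lambda>l. \<Sum>i=1..m. \<alpha> i ^ Suc l) sums (\<Sum>i=1..m. \<alpha> i / (1 - \<alpha> i))"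
    by (intro sums_sum_power_Suc) (use assms(2) in fastforce)
  then show ?thesis
    using phi_eq_odds_ratio sum_odds_pos[of m \<alpha>, OF assms] by (auto simp: sums_iff)
qed

lemma phi_eq_esym_ratio:
  fixes \<alpha> :: "nat \<Rightarrow> real"
  assumes "m \<ge> 1" "\<And>i. i \<in> {1..m} \<Longrightarrow> 0 < \<alpha> i \<and> \<alpha> i < 1"
  shows "phi m \<alpha> = (\<Sum>j=1..m. (-1) ^ (j - 1) * real j * esym m \<alpha> j)
                 / (1 + (\<Sum>j=2..m. (-1) ^ (j - 1) * real (j - 1) * esym m \<alpha> j))"
proof -
  define s where "s = (\<Sum>i=1..m. \<alpha> i / (1 - \<alpha> i))"
  define Q where "Q = (\<Prod>i\<in>{1..m}. 1 - \<alpha> i)"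
  have "Q > 0"
    unfolding Q_def using assms(2) by (intro prod_pos) auto
  have Qs: "Q * s = (\<Sum>i\<in>{1..m}. \<alpha> i * (\<Prod>k\<in>{1..m} - {i}. 1 - \<alpha> k))"
    unfolding Q_def s_def by (intro prod_one_minus_mult_sum_odds) (use assms(2) in fastforce)+
  have "s > 0"
    unfolding s_def by (rule sum_odds_pos) (use assms in auto)
  then have "phi m \<alpha> = s / (1 + s)"
    unfolding s_def by (simp add: phi_eq_odds_ratio)
  also have "\<dots> = (Q * s) / (Q * (1 + s))"
    using \<open>Q > 0\<close> by simp
  also have "Q * (1 + s) = Q + Q * s"
    by (simp add: algebra_simps)
  finally show ?thesis
    unfolding alternating_degree_esym_sum one_plus_alternating_esym_sum Qs[symmetric] Q_def[symmetric] .
qed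

lemma less_phi:
  fixes \<alpha> :: "nat \<Rightarrow> real"
  assumes "m \<ge> 2" "\<And>i. i \<in> {1..m} \<Longrightarrow> 0 < \<alpha> i \<and> \<alpha> i < 1" "k \<in> {1..m}"
  shows "\<alpha> k < phi m \<alpha>"
proof -
  define s where "s = (\<Sum>i=1..m. \<alpha> i / (1 - \<alpha> i))"
  have "(if k = 1 then 2 else 1) \<in> {1..m} - {k}"
    using assms(1,3) by auto
  then have "{1..m} - {k} \<noteq> {}"
    by blast
  then have "(\<Sum>i\<in>{1..m} - {k}. \<alpha> i / (1 - \<alpha> i)) > 0"
    using assms(2) by (intro sum_pos) auto
  then have "s > \<alpha> k / (1 - \<alpha> k)"
    unfolding s_def using assms(3) by (simp add: sum.remove)
  moreover have "s > 0"
    unfolding s_def using assms(1) by (intro sum_odds_pos) (use assms(2) in auto)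
  ultimately have "\<alpha> k < s / (1 + s)"
    using assms(2)[OF assms(3)] by (simp add: field_simps)
  with \<open>s > 0\<close> show ?thesis
    unfolding s_def by (simp add: phi_eq_odds_ratio)
qed

theorem proposition2p6:
  fixes m :: nat and \<alpha> :: "nat \<Rightarrow> real"
  assumes "m \<ge> 2"
    and "\<And>i. i \<in> {1..m} \<Longrightarrow> 0 < \<alpha> i \<and> \<alpha> i < 1"
  shows "(summable (\<lambda>l. \<Sum>i=1..m. \<alpha> i ^ Suc l)
          \<and> phi m \<alpha> = (\<Sum>l. \<Sum>i=1..m. \<alpha> i ^ Suc l) / (1 + (\<Sum>l. \<Sum>i=1..m. \<alpha> i ^ Suc l)))
       \<and> phi m \<alpha> = (\<Sum>j=1..m. (-1) ^ (j - 1) * real j * esym m \<alpha> j)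
                 / (1 + (\<Sum>j=2..m. (-1) ^ (j - 1) * real (j - 1) * esym m \<alpha> j))
       \<and> phi m \<alpha> > (MAX i\<in>{1..m}. \<alpha> i)"
proof -
  have "m \<ge> 1"
    using assms(1) by simp
  have "(MAX i\<in>{1..m}. \<alpha> i) \<in> \<alpha> ` {1..m}"
    using \<open>m \<ge> 1\<close> by (intro Max_in) auto
  then obtain k where "k \<in> {1..m}" "(MAX i\<in>{1..m}. \<alpha> i) = \<alpha> k"
    by (rule imageE) simp
  moreover have "\<alpha> k < phi m \<alpha>"
    by (rule less_phi) (use assms \<open>k \<in> {1..m}\<close> in auto)
  ultimately show ?thesis
    using phi_eq_power_series_ratio[OF \<open>m \<ge> 1\<close> assms(2)]
      phi_eq_esym_ratio[OF \<open>m \<ge> 1\<close> assms(2)]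
    by simp
qed

end
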